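(* Let $(p_D)_{D\in\mathcal{I}}$ be a probability distribution on $\mathcal{I}$ and $X$ a random variable with $P(X=D)=p_D$. Define the guessing-entropy price $$p^G(\mathbf{Q})=G(X)-\sum_{E:\,p_E>0}p_E\cdot G(X\mid \mathbf{Q}(X)=E),\qquad p_E=\sum_{D:\mathbf{Q}(D)=E}p_D.$$ Then $p^G$ is an arbitrage-free instance-independent pricing function.
   Context: $\mathcal{I}$ is a countable nonempty set of database instances; queries are deterministic functions on $\mathcal{I}$; a query bundle is a finite tuple of queries from a language $\mathcal{L}$, evaluated componentwise; $B(\mathcal{L})$ is the set of bundles, closed under concatenation $\mathbf{Q}_1,\mathbf{Q}_2$. For a random variable $Y$ with values in a countable set, enumerate its values $y_1,y_2,\dots$ in order of non-increasing probability and set $G(Y)=\sum_i i\cdot P(Y=y_i)$ (guessing entropy; it is assumed $G(X)<\infty$ so that the price is defined). $G(X\mid\mathbf{Q}(X)=E)$ is the guessing entropy of the conditional distribution of $X$ given $\mathbf{Q}(X)=E$. An instance-independent pricing function $p$ is arbitrage-free if (i) whenever for all $D',D''\in\mathcal{I}$, $\mathbf{Q}_2(D')=\mathbf{Q}_2(D'')$ implies $\mathbf{Q}_1(D')=\mathbf{Q}_1(D'')$, we have $p(\mathbf{Q}_2)\ge p(\mathbf{Q}_1)$; and (ii) $p(\mathbf{Q}_1,\mathbf{Q}_2)\le p(\mathbf{Q}_1)+p(\mathbf{Q}_2)$ for all bundles. *)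

theory Defs
  imports "HOL-Probability.Probability"
begin

definition enum_index :: "'a pmf \<Rightarrow> nat set" where
  "enum_index p = (if finite (set_pmf p) then {..<card (set_pmf p)} else UNIV)"

(* e enumerates the values of positive probability in order of non-increasing probability;
   position n (0-based) corresponds to the guess number n+1. *)
definition guess_enum :: "'a pmf \<Rightarrow> (nat \<Rightarrow> 'a) \<Rightarrow> bool" where
  "guess_enum p e \<longleftrightarrow>
     bij_betw e (enum_index p) (set_pmf p) \<and>
     (\<forall>i\<in>enum_index p. \<forall>j\<in>enum_index p. i \<le> j \<longrightarrow> pmf p (e j) \<le> pmf p (e i))"

definition guessing_entropy :: "'a pmf \<Rightarrow> ennreal" where
  "guessing_entropy p =
     (let e = (SOME e. guess_enum p e) in
      (\<Sum>n. if n \<in> enum_index p then ennreal (real (Suc n) * pmf p (e n)) else 0))"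

definition bundle_eval :: "('i \<Rightarrow> 'o) list \<Rightarrow> 'i \<Rightarrow> 'o list" where
  "bundle_eval Q D = map (\<lambda>q. q D) Q"

definition price_G :: "'i pmf \<Rightarrow> ('i \<Rightarrow> 'o) list \<Rightarrow> real" where
  "price_G p Q =
     enn2real (guessing_entropy p) -
     enn2real (infsum (\<lambda>E. ennreal (pmf (map_pmf (bundle_eval Q) p) E) *
                            guessing_entropy (cond_pmf p {D. bundle_eval Q D = E}))
                      (set_pmf (map_pmf (bundle_eval Q) p)))"

definition arbitrage_free :: "('i \<Rightarrow> 'o) set \<Rightarrow> (('i \<Rightarrow> 'o) list \<Rightarrow> real) \<Rightarrow> bool" where
  "arbitrage_free L pr \<longleftrightarrow>
     (\<forall>Q1\<in>lists L. \<forall>Q2\<in>lists L.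
        (\<forall>D' D''. bundle_eval Q2 D' = bundle_eval Q2 D'' \<longrightarrow> bundle_eval Q1 D' = bundle_eval Q1 D'')
        \<longrightarrow> pr Q2 \<ge> pr Q1) \<and>
     (\<forall>Q1\<in>lists L. \<forall>Q2\<in>lists L. pr (Q1 @ Q2) \<le> pr Q1 + pr Q2)"

end

theory Submission
  imports Defs
begin

text \<open>
  Enumerate a distribution q as x_0, x_1, ... in order of non-increasing probability. Then
  min (q x_i) (q x_j) = q x_max(i,j), so the sum of these minima over the lower triangle j \<le> i is
  the sum of (i + 1) q x_i, that is G(q); the full square is twice the triangle minus the diagonal,
  whence 2 G(q) = 1 + (sum over all pairs x, y of min (q x) (q y)).
  Applying this to every conditional distribution of X given Q(X) = E and weighting with p_E gives
  2 (sum over E of p_E G(X | Q(X) = E)) = 1 + (sum of min (p x) (p y) over the pairs with Q x = Q y).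
  So the price of Q is half the sum of min (p x) (p y) over the pairs separated by Q. This grows when
  Q is refined, and is subadditive under concatenation because a pair separated by Q1,Q2 is
  separated by Q1 or by Q2.
\<close>

lemma finite_pmf_ge:
  fixes q :: "'a pmf"
  assumes "c > 0"
  shows "finite {x. c \<le> pmf q x}"
proof (rule ccontr)
  assume inf: "infinite {x. c \<le> pmf q x}"
  obtain n :: nat where n: "1 / c < real n" using reals_Archimedean2 by blast
  obtain B where B: "finite B" "card B = n" "B \<subseteq> {x. c \<le> pmf q x}"
    using infinite_arbitrarily_large[OF inf] by blast
  have "real n * c = (\<Sum>x\<in>B. c)" using B by simp
  also have "\<dots> \<le> (\<Sum>x\<in>B. pmf q x)" using B by (intro sum_mono) auto
  also have "\<dots> = measure q B" using B by (simp add: measure_measure_pmf_finite)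
  also have "\<dots> \<le> 1" by simp
  finally have "real n * c \<le> 1" .
  with n assms show False by (simp add: field_simps)
qed

lemma down_closed_nat_eq:
  fixes D :: "nat set"
  assumes "\<And>d k. d \<in> D \<Longrightarrow> k < d \<Longrightarrow> k \<in> D"
  shows "D = (if finite D then {..<card D} else UNIV)"
proof (cases "finite D")
  case True
  have "D \<subseteq> {..<card D}"
  proof
    fix d assume d: "d \<in> D"
    have "{..d} \<subseteq> D" using assms d by (auto simp: le_less)
    hence "card {..d} \<le> card D" using True by (intro card_mono)
    thus "d \<in> {..<card D}" by simp
  qed
  with True show ?thesis by (simp add: card_subset_eq)
next
  case False
  have "k \<in> D" for k
  proof -
    obtain d where "d \<in> D" "k < d" using False unfolding infinite_nat_iff_unbounded by blast
    thus ?thesis using assms by blast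
  qed
  with False show ?thesis by auto
qed

definition rank_in :: "('a \<Rightarrow> 'a \<Rightarrow> bool) \<Rightarrow> 'a set \<Rightarrow> 'a \<Rightarrow> nat" where
  "rank_in R S x = card {y\<in>S. R y x}"

lemma rank_in_less:
  assumes trans: "\<And>x y z. R x y \<Longrightarrow> R y z \<Longrightarrow> R x z"
    and irrefl: "\<And>x. \<not> R x x"
    and fin: "finite {z\<in>S. R z y}"
    and "R x y" "x \<in> S"
  shows "rank_in R S x < rank_in R S y"
proof -
  have "{z\<in>S. R z x} \<subset> {z\<in>S. R z y}"
    using assms by blast
  with fin show ?thesis unfolding rank_in_def by (simp add: psubset_card_mono)
qed

lemma bij_betw_rank_in:
  assumes trans: "\<And>x y z. R x y \<Longrightarrow> R y z \<Longrightarrow> R x z"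
    and irrefl: "\<And>x. \<not> R x x"
    and total: "\<And>x y. x \<in> S \<Longrightarrow> y \<in> S \<Longrightarrow> x \<noteq> y \<Longrightarrow> R x y \<or> R y x"
    and fin: "\<And>x. x \<in> S \<Longrightarrow> finite {y\<in>S. R y x}"
  shows "bij_betw (rank_in R S) S (if finite S then {..<card S} else UNIV)"
proof -
  let ?r = "rank_in R S" and ?P = "\<lambda>x. {y\<in>S. R y x}"
  have r_less: "?r x < ?r y" if "R x y" "x \<in> S" "y \<in> S" for x y
    by (rule rank_in_less[OF trans irrefl fin[OF that(3)] that(1,2)])
  have inj: "inj_on ?r S"
    by (rule inj_onI) (metis total r_less less_irrefl_nat)
  have "k \<in> ?r ` S" if d: "d \<in> ?r ` S" and k: "k < d" for d k
  proof -
    obtain x where x: "x \<in> S" "d = ?r x" using d by blast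
    have "?r ` ?P x \<subseteq> {..<?r x}" using r_less x by auto
    moreover have "card (?r ` ?P x) = ?r x"
      using inj_on_subset[OF inj, of "?P x"] by (simp add: card_image) (simp add: rank_in_def)
    ultimately have "?r ` ?P x = {..<?r x}" using fin[OF x(1)] by (intro card_subset_eq) auto
    thus ?thesis using k x by auto
  qed
  then have "?r ` S = (if finite (?r ` S) then {..<card (?r ` S)} else UNIV)"
    by (rule down_closed_nat_eq)
  also have "\<dots> = (if finite S then {..<card S} else UNIV)"
    using inj by (simp add: finite_image_iff card_image)
  finally show ?thesis using inj by (simp add: bij_betw_def)
qed

lemma guess_enum_exists:
  fixes q :: "'a::countable pmf"
  shows "\<exists>e. guess_enum q e"
proof -
  define S where "S = set_pmf q"
  \<comment> \<open>Ties are broken by \<open>to_nat\<close>; only finitely many points precede a point of positive mass.\<close>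
  define R where "R x y \<longleftrightarrow> pmf q y < pmf q x \<or> (pmf q x = pmf q y \<and> to_nat x < to_nat y)" for x y
  have fin: "finite {y\<in>S. R y x}" if "x \<in> S" for x
  proof -
    have "finite {y. pmf q x \<le> pmf q y}"
      using that by (intro finite_pmf_ge) (simp add: S_def pmf_positive)
    then show ?thesis by (rule finite_subset[rotated]) (auto simp: R_def)
  qed
  have total: "R x y \<or> R y x" if "x \<noteq> y" for x y
  proof -
    have "to_nat x \<noteq> to_nat y" using that by simp
    then show ?thesis unfolding R_def by linarith
  qed
  have rank_bij: "bij_betw (rank_in R S) S (enum_index q)"
    unfolding enum_index_def S_def[symmetric]
    using total fin by (intro bij_betw_rank_in) (auto simp: R_def)
  then have bij: "bij_betw (inv_into S (rank_in R S)) (enum_index q) S"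
    by (rule bij_betw_inv_into)
  have "pmf q (inv_into S (rank_in R S) j) \<le> pmf q (inv_into S (rank_in R S) i)"
    if "i \<in> enum_index q" "j \<in> enum_index q" "i \<le> j" for i j
  proof (rule ccontr)
    let ?x = "inv_into S (rank_in R S) i" and ?y = "inv_into S (rank_in R S) j"
    assume "\<not> ?thesis"
    then have "R ?y ?x" by (simp add: R_def)
    moreover have "?x \<in> S" "?y \<in> S" using bij that by (auto dest: bij_betwE)
    ultimately have "rank_in R S ?y < rank_in R S ?x"
      using fin[OF \<open>?x \<in> S\<close>] by (intro rank_in_less[of R]) (auto simp: R_def)
    moreover have "rank_in R S ?x = i" "rank_in R S ?y = j"
      using that rank_bij
      by (auto intro: f_inv_into_f simp: bij_betw_def)
    ultimately show False using \<open>i \<le> j\<close> by simp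
  qed
  with bij show ?thesis unfolding guess_enum_def S_def by blast
qed

lemma infsum_ennreal_eq_nn_integral:
  fixes g :: "'a \<Rightarrow> ennreal"
  assumes "countable A"
  shows "infsum g A = (\<integral>\<^sup>+x. g x \<partial>count_space A)"
proof (cases "finite A")
  case True
  then show ?thesis by (simp add: nn_integral_count_space_finite)
next
  case False
  then have bij: "bij_betw (from_nat_into A) UNIV A"
    using assms by (simp add: bij_betw_from_nat_into)
  have "infsum g A = infsum (\<lambda>n. g (from_nat_into A n)) UNIV"
    by (rule infsum_reindex_bij_betw[OF bij, symmetric])
  also have "\<dots> = (\<Sum>n. g (from_nat_into A n))"
    by (rule sums_unique, rule has_sum_imp_sums, rule has_sum_infsum, rule nonneg_summable_on_complete) simp
  also have "\<dots> = (\<integral>\<^sup>+n. g (from_nat_into A n) \<partial>count_space UNIV)"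
    by (rule nn_integral_count_space_nat[symmetric])
  also have "\<dots> = (\<integral>\<^sup>+x. g x \<partial>count_space A)"
    by (rule nn_integral_bij_count_space[OF bij])
  finally show ?thesis .
qed

lemma nn_integral_count_space_reindex_support:
  fixes \<phi> :: "'a \<Rightarrow> ennreal"
  assumes bij: "bij_betw e I (set_pmf q)"
    and supp: "\<And>x. x \<notin> set_pmf q \<Longrightarrow> \<phi> x = 0"
  shows "(\<integral>\<^sup>+n. (if n \<in> I then \<phi> (e n) else 0) \<partial>count_space UNIV) = (\<integral>\<^sup>+x. \<phi> x \<partial>count_space UNIV)"
proof -
  have "(\<integral>\<^sup>+n. (if n \<in> I then \<phi> (e n) else 0) \<partial>count_space UNIV) = (\<integral>\<^sup>+n. \<phi> (e n) \<partial>count_space I)"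
    by (subst nn_integral_count_space_eq[of I, symmetric]) (auto intro: nn_integral_cong)
  also have "\<dots> = (\<integral>\<^sup>+x. \<phi> x \<partial>count_space (set_pmf q))"
    by (rule nn_integral_bij_count_space[OF bij])
  also have "\<dots> = (\<integral>\<^sup>+x. \<phi> x \<partial>count_space UNIV)"
    by (rule nn_integral_count_space_eq) (auto simp: supp)
  finally show ?thesis .
qed

lemma weighted_sum_antitone:
  fixes h :: "nat \<Rightarrow> real"
  assumes nonneg: "\<And>n. 0 \<le> h n" and antitone: "\<And>m n. m \<le> n \<Longrightarrow> h n \<le> h m"
  shows "2 * (\<Sum>n. ennreal (real (Suc n) * h n))
       = (\<integral>\<^sup>+n. h n \<partial>count_space UNIV)
         + (\<integral>\<^sup>+n. \<integral>\<^sup>+m. ennreal (min (h n) (h m)) \<partial>count_space UNIV \<partial>count_space UNIV)"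
proof -
  define T where "T n m = (if m \<le> n then ennreal (min (h n) (h m)) else 0)" for n m
  have row: "(\<integral>\<^sup>+m. T n m \<partial>count_space UNIV) = ennreal (real (Suc n) * h n)" for n
  proof -
    have "(\<integral>\<^sup>+m. T n m \<partial>count_space UNIV)
        = (\<integral>\<^sup>+m. ennreal (h n) * indicator {..n} m \<partial>count_space UNIV)"
      using antitone by (intro nn_integral_cong) (auto simp: T_def min_def)
    also have "\<dots> = ennreal (h n) * of_nat (Suc n)"
      by (simp add: nn_integral_cmult_indicator emeasure_count_space_finite)
    finally show ?thesis
      using nonneg by (simp add: ennreal_mult ennreal_of_nat_eq_real_of_nat mult.commute)
  qed
  have diagonal: "(\<integral>\<^sup>+m. (if m = n then ennreal (h n) else 0) \<partial>count_space UNIV) = ennreal (h n)" for n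
  proof -
    have "(\<lambda>m. if m = n then ennreal (h n) else 0) = (\<lambda>m. ennreal (h n) * indicator {n} m)"
      by (auto simp: fun_eq_iff)
    then show ?thesis by (simp add: nn_integral_cmult_indicator)
  qed
  have "(\<Sum>n. ennreal (real (Suc n) * h n)) = (\<integral>\<^sup>+n. ennreal (real (Suc n) * h n) \<partial>count_space UNIV)"
    by (rule nn_integral_count_space_nat[symmetric])
  also have "\<dots> = (\<integral>\<^sup>+n. \<integral>\<^sup>+m. T n m \<partial>count_space UNIV \<partial>count_space UNIV)"
    by (simp only: row)
  moreover have "\<dots> = (\<integral>\<^sup>+n. \<integral>\<^sup>+m. T m n \<partial>count_space UNIV \<partial>count_space UNIV)"
    by (rule nn_integral_count_space_nn_integral) auto
  ultimately have "2 * (\<Sum>n. ennreal (real (Suc n) * h n))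
      = (\<integral>\<^sup>+n. \<integral>\<^sup>+m. T n m \<partial>count_space UNIV \<partial>count_space UNIV)
        + (\<integral>\<^sup>+n. \<integral>\<^sup>+m. T m n \<partial>count_space UNIV \<partial>count_space UNIV)"
    by (simp add: mult_2)
  also have "\<dots> = (\<integral>\<^sup>+n. \<integral>\<^sup>+m. T n m + T m n \<partial>count_space UNIV \<partial>count_space UNIV)"
    by (simp add: nn_integral_add)
  \<comment> \<open>The lower and upper triangle together cover the full square and the diagonal once more.\<close>
  also have "\<dots> = (\<integral>\<^sup>+n. \<integral>\<^sup>+m. ennreal (min (h n) (h m)) + (if m = n then ennreal (h n) else 0)
                     \<partial>count_space UNIV \<partial>count_space UNIV)"
    by (intro nn_integral_cong) (auto simp: T_def min.commute)
  also have "\<dots> = (\<integral>\<^sup>+n. (\<integral>\<^sup>+m. ennreal (min (h n) (h m)) \<partial>count_space UNIV) + ennreal (h n)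
                     \<partial>count_space UNIV)"
    by (simp add: nn_integral_add diagonal)
  finally show ?thesis by (simp add: nn_integral_add add.commute)
qed

definition pair_min_mass :: "'a pmf \<Rightarrow> ('a \<Rightarrow> 'a \<Rightarrow> bool) \<Rightarrow> ennreal" where
  "pair_min_mass q R = (\<integral>\<^sup>+z. (if R (fst z) (snd z) then ennreal (min (pmf q (fst z)) (pmf q (snd z))) else 0)
                          \<partial>count_space UNIV)"

definition enum_mass :: "'a pmf \<Rightarrow> (nat \<Rightarrow> 'a) \<Rightarrow> nat set \<Rightarrow> nat \<Rightarrow> real" where
  "enum_mass q e I n = (if n \<in> I then pmf q (e n) else 0)"

lemma nn_integral_enum_mass:
  assumes bij: "bij_betw e I (set_pmf q)"
  shows "(\<integral>\<^sup>+n. enum_mass q e I n \<partial>count_space UNIV) = 1"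
proof -
  have "(\<integral>\<^sup>+n. enum_mass q e I n \<partial>count_space UNIV)
      = (\<integral>\<^sup>+n. (if n \<in> I then ennreal (pmf q (e n)) else 0) \<partial>count_space UNIV)"
    by (intro nn_integral_cong) (simp add: enum_mass_def)
  also have "\<dots> = (\<integral>\<^sup>+x. pmf q x \<partial>count_space UNIV)"
    by (rule nn_integral_count_space_reindex_support[OF bij]) (simp add: set_pmf_iff)
  finally show ?thesis by (simp add: nn_integral_pmf)
qed

lemma nn_integral_min_enum_mass:
  assumes bij: "bij_betw e I (set_pmf q)"
  shows "(\<integral>\<^sup>+n. \<integral>\<^sup>+m. ennreal (min (enum_mass q e I n) (enum_mass q e I m)) \<partial>count_space UNIV \<partial>count_space UNIV)
       = pair_min_mass q (\<lambda>_ _. True)"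
proof -
  let ?h = "enum_mass q e I"
  have supp: "pmf q x = 0" if "x \<notin> set_pmf q" for x
    using that by (simp add: set_pmf_iff)
  have row: "(\<integral>\<^sup>+m. ennreal (min (?h n) (?h m)) \<partial>count_space UNIV)
      = (if n \<in> I then \<integral>\<^sup>+y. ennreal (min (pmf q (e n)) (pmf q y)) \<partial>count_space UNIV else 0)" for n
  proof (cases "n \<in> I")
    case True
    have "(\<integral>\<^sup>+m. ennreal (min (?h n) (?h m)) \<partial>count_space UNIV)
        = (\<integral>\<^sup>+m. (if m \<in> I then ennreal (min (pmf q (e n)) (pmf q (e m))) else 0) \<partial>count_space UNIV)"
      using True by (intro nn_integral_cong) (auto simp: enum_mass_def min_def)
    also have "\<dots> = (\<integral>\<^sup>+y. ennreal (min (pmf q (e n)) (pmf q y)) \<partial>count_space UNIV)"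
      by (rule nn_integral_count_space_reindex_support[OF bij]) (simp add: supp min_def)
    finally show ?thesis using True by simp
  qed (simp add: enum_mass_def)
  have "(\<integral>\<^sup>+n. \<integral>\<^sup>+m. ennreal (min (?h n) (?h m)) \<partial>count_space UNIV \<partial>count_space UNIV)
      = (\<integral>\<^sup>+x. \<integral>\<^sup>+y. ennreal (min (pmf q x) (pmf q y)) \<partial>count_space UNIV \<partial>count_space UNIV)"
    unfolding row by (rule nn_integral_count_space_reindex_support[OF bij]) (simp add: supp min_def)
  also have "\<dots> = pair_min_mass q (\<lambda>_ _. True)"
    unfolding pair_min_mass_def
    using nn_integral_fst_count_space[of "\<lambda>z. ennreal (min (pmf q (fst z)) (pmf q (snd z)))"] by simp
  finally show ?thesis .
qed

lemma guess_enum_weighted_sum: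
  assumes "guess_enum q e"
  shows "2 * (\<Sum>n. if n \<in> enum_index q then ennreal (real (Suc n) * pmf q (e n)) else 0)
       = 1 + pair_min_mass q (\<lambda>_ _. True)"
proof -
  let ?I = "enum_index q"
  let ?h = "enum_mass q e ?I"
  from assms have bij: "bij_betw e ?I (set_pmf q)"
    and sorted: "\<And>i j. i \<in> ?I \<Longrightarrow> j \<in> ?I \<Longrightarrow> i \<le> j \<Longrightarrow> pmf q (e j) \<le> pmf q (e i)"
    unfolding guess_enum_def by auto
  have "m \<in> ?I" if "n \<in> ?I" "m \<le> n" for m n
    using that by (auto simp: enum_index_def split: if_splits)
  then have antitone: "?h n \<le> ?h m" if "m \<le> n" for m n
    using that sorted by (auto simp: enum_mass_def)
  have "(\<Sum>n. if n \<in> ?I then ennreal (real (Suc n) * pmf q (e n)) else 0) = (\<Sum>n. ennreal (real (Suc n) * ?h n))"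
    by (intro suminf_cong) (simp add: enum_mass_def)
  then have "2 * (\<Sum>n. if n \<in> ?I then ennreal (real (Suc n) * pmf q (e n)) else 0)
      = 2 * (\<Sum>n. ennreal (real (Suc n) * ?h n))"
    by (rule arg_cong)
  also have "\<dots> = (\<integral>\<^sup>+n. ?h n \<partial>count_space UNIV)
         + (\<integral>\<^sup>+n. \<integral>\<^sup>+m. ennreal (min (?h n) (?h m)) \<partial>count_space UNIV \<partial>count_space UNIV)"
    by (rule weighted_sum_antitone[OF _ antitone]) (simp add: enum_mass_def)
  finally show ?thesis
    by (simp only: nn_integral_enum_mass[OF bij] nn_integral_min_enum_mass[OF bij])
qed

lemma guessing_entropy_eq_pair_min_mass:
  fixes q :: "'a::countable pmf"
  shows "2 * guessing_entropy q = 1 + pair_min_mass q (\<lambda>_ _. True)"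
proof -
  have "guess_enum q (SOME e. guess_enum q e)"
    using guess_enum_exists by (rule someI_ex)
  then show ?thesis
    unfolding guessing_entropy_def Let_def by (rule guess_enum_weighted_sum)
qed

lemma pair_min_mass_split:
  "pair_min_mass q (\<lambda>_ _. True) = pair_min_mass q R + pair_min_mass q (\<lambda>x y. \<not> R x y)"
  unfolding pair_min_mass_def by (subst nn_integral_add[symmetric]) (auto intro!: nn_integral_cong)

lemma pair_min_mass_mono:
  assumes "\<And>x y. R x y \<Longrightarrow> S x y"
  shows "pair_min_mass q R \<le> pair_min_mass q S"
  unfolding pair_min_mass_def using assms by (intro nn_integral_mono) auto

lemma pair_min_mass_disj_le:
  "pair_min_mass q (\<lambda>x y. R x y \<or> S x y) \<le> pair_min_mass q R + pair_min_mass q S"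
  unfolding pair_min_mass_def by (subst nn_integral_add[symmetric]) (auto intro!: nn_integral_mono)

lemma pair_min_mass_less_top:
  fixes q :: "'a::countable pmf"
  assumes "guessing_entropy q < \<infinity>"
  shows "pair_min_mass q R < \<infinity>"
proof -
  have "pair_min_mass q R \<le> pair_min_mass q (\<lambda>_ _. True)"
    by (rule pair_min_mass_mono) simp
  also have "\<dots> \<le> 2 * guessing_entropy q"
    by (simp add: guessing_entropy_eq_pair_min_mass)
  also have "\<dots> < \<infinity>"
    using assms by (simp add: ennreal_mult_less_top)
  finally show ?thesis .
qed

lemma pair_min_mass_cond_pmf:
  assumes "E \<in> set_pmf (map_pmf f p)"
  shows "ennreal (pmf (map_pmf f p) E) * pair_min_mass (cond_pmf p {x. f x = E}) (\<lambda>_ _. True)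
       = pair_min_mass p (\<lambda>x y. f x = E \<and> f y = E)"
proof -
  define c where "c = pmf (map_pmf f p) E"
  have "0 < c" using assms by (simp add: c_def pmf_positive)
  have "measure p {x. f x = E} = c" by (simp add: c_def pmf_map vimage_def)
  moreover have "set_pmf p \<inter> {x. f x = E} \<noteq> {}" using assms by auto
  ultimately have cond: "pmf (cond_pmf p {x. f x = E}) x = (if f x = E then pmf p x / c else 0)" for x
    by (simp add: pmf_cond)
  have "ennreal c * ennreal (min (pmf (cond_pmf p {x. f x = E}) x) (pmf (cond_pmf p {x. f x = E}) y))
      = (if f x = E \<and> f y = E then ennreal (min (pmf p x) (pmf p y)) else 0)" for x y
  proof -
    have "c * min (a / c) (b / c) = min a b" for a b
      using \<open>0 < c\<close> by (simp add: min_mult_distrib_left)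
    then show ?thesis using \<open>0 < c\<close> by (simp add: cond ennreal_mult[symmetric])
  qed
  then show ?thesis
    unfolding pair_min_mass_def c_def[symmetric] by (simp add: nn_integral_cmult[symmetric])
qed

lemma nn_integral_common_fibre:
  "(\<integral>\<^sup>+E. (if f x = E \<and> f y = E then ennreal (min (pmf p x) (pmf p y)) else 0)
      \<partial>count_space (set_pmf (map_pmf f p)))
   = (if f x = f y then ennreal (min (pmf p x) (pmf p y)) else 0)"
  (is "(\<integral>\<^sup>+E. ?g E \<partial>count_space ?A) = _")
proof (cases "f x = f y \<and> f x \<in> ?A")
  case True
  then have "(\<integral>\<^sup>+E. ?g E \<partial>count_space ?A)
      = (\<integral>\<^sup>+E. ennreal (min (pmf p x) (pmf p y)) * indicator {f x} E \<partial>count_space ?A)"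
    by (intro nn_integral_cong) auto
  also have "\<dots> = ennreal (min (pmf p x) (pmf p y)) * emeasure (count_space ?A) {f x}"
    using conjunct2[OF True] by (intro nn_integral_cmult_indicator) (simp del: set_map_pmf)
  also have "\<dots> = ennreal (min (pmf p x) (pmf p y))"
    using conjunct2[OF True] by (simp add: emeasure_count_space_finite del: set_map_pmf)
  finally show ?thesis using True by simp
next
  case False
  then have vanish: "pmf p x = 0 \<or> f x \<noteq> f y"
    by (metis imageI set_map_pmf set_pmf_iff)
  then have "?g E = 0" for E
    by (auto simp: min_def)
  with vanish show ?thesis by (auto simp: min_def)
qed

lemma cond_guessing_entropy_sum:
  fixes p :: "'i::countable pmf" and f :: "'i \<Rightarrow> 'b"
  shows "2 * infsum (\<lambda>E. ennreal (pmf (map_pmf f p) E) * guessing_entropy (cond_pmf p {x. f x = E}))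
                     (set_pmf (map_pmf f p))
       = 1 + pair_min_mass p (\<lambda>x y. f x = f y)"
proof -
  define A where "A = set_pmf (map_pmf f p)"
  have "2 * infsum (\<lambda>E. ennreal (pmf (map_pmf f p) E) * guessing_entropy (cond_pmf p {x. f x = E})) A
      = (\<integral>\<^sup>+E. ennreal (pmf (map_pmf f p) E) * (2 * guessing_entropy (cond_pmf p {x. f x = E}))
           \<partial>count_space A)"
    by (simp add: A_def infsum_ennreal_eq_nn_integral nn_integral_cmult[symmetric] ac_simps)
  also have "\<dots> = (\<integral>\<^sup>+E. ennreal (pmf (map_pmf f p) E) + pair_min_mass p (\<lambda>x y. f x = E \<and> f y = E)
                   \<partial>count_space A)"
    by (intro nn_integral_cong)
      (simp add: guessing_entropy_eq_pair_min_mass distrib_left pair_min_mass_cond_pmf A_def)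
  also have "\<dots> = 1 + (\<integral>\<^sup>+E. pair_min_mass p (\<lambda>x y. f x = E \<and> f y = E) \<partial>count_space A)"
  proof -
    have "(\<integral>\<^sup>+E. ennreal (pmf (map_pmf f p) E) \<partial>count_space A) = 1"
      unfolding A_def nn_integral_pmf by (rule emeasure_pmf)
    then show ?thesis by (simp add: nn_integral_add)
  qed
  also have "(\<integral>\<^sup>+E. pair_min_mass p (\<lambda>x y. f x = E \<and> f y = E) \<partial>count_space A)
      = pair_min_mass p (\<lambda>x y. f x = f y)"
    unfolding pair_min_mass_def
    using countable_set_pmf[of "map_pmf f p"]
    by (subst nn_integral_count_space_nn_integral[symmetric]) (simp_all only: A_def nn_integral_common_fibre, simp_all)
  finally show ?thesis by (simp add: A_def)
qed

lemma price_G_eq_pair_min_mass: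
  fixes p :: "'i::countable pmf"
  assumes "guessing_entropy p < \<infinity>"
  shows "price_G p Q = enn2real (pair_min_mass p (\<lambda>x y. bundle_eval Q x \<noteq> bundle_eval Q y)) / 2"
proof -
  let ?f = "bundle_eval Q"
  let ?S = "infsum (\<lambda>E. ennreal (pmf (map_pmf ?f p) E) * guessing_entropy (cond_pmf p {x. ?f x = E}))
                   (set_pmf (map_pmf ?f p))"
  let ?N = "pair_min_mass p (\<lambda>x y. ?f x \<noteq> ?f y)"
  have split: "2 * guessing_entropy p = 2 * ?S + ?N"
    using guessing_entropy_eq_pair_min_mass[of p] pair_min_mass_split[of p "\<lambda>x y. ?f x = ?f y"]
      cond_guessing_entropy_sum[of ?f p]
    by (simp add: add.assoc)
  have "2 * ?S < \<infinity>"
    using pair_min_mass_less_top[OF assms] by (subst cond_guessing_entropy_sum) simp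
  moreover have "?N < \<infinity>"
    by (rule pair_min_mass_less_top[OF assms])
  ultimately have "enn2real (2 * guessing_entropy p) = enn2real (2 * ?S) + enn2real ?N"
    by (simp add: split enn2real_plus)
  then have "2 * enn2real (guessing_entropy p) = 2 * enn2real ?S + enn2real ?N"
    by (simp add: enn2real_mult)
  then show ?thesis
    unfolding price_G_def by simp
qed

lemma bundle_eval_append:
  "bundle_eval (Q1 @ Q2) D = bundle_eval Q1 D @ bundle_eval Q2 D"
  by (simp add: bundle_eval_def)

lemma price_G_mono:
  fixes p :: "'i::countable pmf"
  assumes "guessing_entropy p < \<infinity>"
    and "\<And>x y. bundle_eval Q2 x = bundle_eval Q2 y \<Longrightarrow> bundle_eval Q1 x = bundle_eval Q1 y"
  shows "price_G p Q1 \<le> price_G p Q2"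
proof -
  have "pair_min_mass p (\<lambda>x y. bundle_eval Q1 x \<noteq> bundle_eval Q1 y)
      \<le> pair_min_mass p (\<lambda>x y. bundle_eval Q2 x \<noteq> bundle_eval Q2 y)"
    using assms(2) by (intro pair_min_mass_mono) blast
  then show ?thesis
    using pair_min_mass_less_top[OF assms(1)] by (simp add: price_G_eq_pair_min_mass[OF assms(1)] enn2real_mono)
qed

lemma price_G_append_le:
  fixes p :: "'i::countable pmf"
  assumes "guessing_entropy p < \<infinity>"
  shows "price_G p (Q1 @ Q2) \<le> price_G p Q1 + price_G p Q2"
proof -
  let ?N = "\<lambda>Q. pair_min_mass p (\<lambda>x y. bundle_eval Q x \<noteq> bundle_eval Q y)"
  have "?N (Q1 @ Q2) \<le> pair_min_mass p (\<lambda>x y. bundle_eval Q1 x \<noteq> bundle_eval Q1 y \<or> bundle_eval Q2 x \<noteq> bundle_eval Q2 y)"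
    by (rule pair_min_mass_mono) (auto simp: bundle_eval_append)
  also have "\<dots> \<le> ?N Q1 + ?N Q2"
    by (rule pair_min_mass_disj_le)
  finally have "enn2real (?N (Q1 @ Q2)) \<le> enn2real (?N Q1) + enn2real (?N Q2)"
    using pair_min_mass_less_top[OF assms] by (simp add: enn2real_mono enn2real_plus[symmetric])
  then show ?thesis by (simp add: price_G_eq_pair_min_mass[OF assms])
qed

theorem lemma19:
  fixes p :: "'i::countable pmf" and L :: "('i \<Rightarrow> 'o) set"
  assumes "guessing_entropy p < \<infinity>"
  shows "arbitrage_free L (price_G p)"
  unfolding arbitrage_free_def
  using price_G_mono[OF assms] price_G_append_le[OF assms] by blast

end
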